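(* Let $(B_\eta)_{\eta>0}$ be real random variables with $\|B_\eta\|_{L^\infty(\Omega)}\le M$ for all $\eta>0$ and $B_\eta=\eta\bar B_0+\eta^2\bar R_0+o(\eta^2)$ weakly in $L^2(\Omega)$ for some $\bar B_0,\bar R_0\in L^2(\Omega)$ (i.e. $\eta^{-2}(B_\eta-\eta\bar B_0-\eta^2\bar R_0)\rightharpoonup0$ weakly in $L^2(\Omega)$). Assume further that the laws $dP_\eta$ of $B_\eta$ satisfy $dP_\eta=\delta_0+\eta\,d\bar P_1+\eta^2d\bar P_2+o(\eta^2)$ for some compactly supported distributions $d\bar P_1,d\bar P_2$ (i.e. $\mathbb E\varphi(B_\eta)=\varphi(0)+\eta\langle d\bar P_1,\varphi\rangle+\eta^2\langle d\bar P_2,\varphi\rangle+o(\eta^2)$ for all smooth test functions $\varphi$). Then $dP_\eta=\delta_0-\eta\,\mathbb E(\bar B_0)\delta_0'+\frac{\eta^2}{2}\mathbb E(\bar B_0^2)\delta_0''-\eta^2\,\mathbb E(\bar R_0)\delta_0'+o(\eta^2)$ in $\mathcal E'(\mathbb R)$.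
   Context: In the paper these variables are the mother variables of a field $b_\eta(x,\omega)=\sum_{k\in\mathbb Z^d}\mathbf 1_{Q+k}(x)B_\eta^k(\omega)$ with $(B_\eta^k)$ i.i.d. copies of $B_\eta$. $\delta_0$ is the Dirac mass at $0$; $\langle\delta_0',\varphi\rangle=-\varphi'(0)$, $\langle\delta_0'',\varphi\rangle=\varphi''(0)$. $\mathcal E'(\mathbb R)$ is the space of compactly supported distributions. *)

theory Defs
  imports "HOL-Probability.Probability"
begin

definition smooth_fun :: "(real \<Rightarrow> real) \<Rightarrow> bool" where
  "smooth_fun \<phi> \<longleftrightarrow> (\<forall>k x. ((deriv ^^ k) \<phi>) differentiable (at x))"

text \<open>Compactly supported distributions on the real line, i.e. elements of E'(R):
  linear functionals on C-infinity(R) which are continuous for the C-infinity topology,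
  i.e. bounded by finitely many derivatives on a compact set.\<close>
definition compact_distribution :: "((real \<Rightarrow> real) \<Rightarrow> real) \<Rightarrow> bool" where
  "compact_distribution T \<longleftrightarrow>
     (\<forall>\<phi> \<psi> a b. smooth_fun \<phi> \<longrightarrow> smooth_fun \<psi> \<longrightarrow>
        T (\<lambda>x. a * \<phi> x + b * \<psi> x) = a * T \<phi> + b * T \<psi>) \<and>
     (\<exists>R C N. R \<ge> 0 \<and> C \<ge> 0 \<and>
        (\<forall>\<phi>. smooth_fun \<phi> \<longrightarrow>
           \<bar>T \<phi>\<bar> \<le> C * (\<Sum>k\<le>N. SUP x\<in>{-R..R}. \<bar>(deriv ^^ k) \<phi> x\<bar>)))"

end

(*
  Expand \<phi> to second order at 0: uniformly in \<eta>, since |B_\<eta>| \<le> M,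
    E \<phi>(B_\<eta>) = \<phi>(0) + \<phi>'(0) E B_\<eta> + \<phi>''(0)/2 E B_\<eta>^2 + O(E |B_\<eta>|^3).
  Testing the weak expansion against 1 gives E B_\<eta> = \<eta> E B0 + \<eta>^2 E R0 + o(\<eta>^2).
  The weak expansion also gives strong convergence B_\<eta>/\<eta> \<rightarrow> B0 in L^2: the remainders
  (B_\<eta> - \<eta> B0 - \<eta>^2 R0)/\<eta>^2 are weakly null, hence bounded in L^2 by the uniform boundedness
  principle (proved by a gliding hump), so ||B_\<eta>/\<eta> - B0|| = O(\<eta>). Therefore
  E B_\<eta>^2 = \<eta>^2 E B0^2 + o(\<eta>^2), and E |B_\<eta>|^3 / \<eta>^2 = E |B_\<eta>| (B_\<eta>/\<eta>)^2 \<rightarrow> 0 because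
  |B_\<eta>| \<le> M and E |B_\<eta>| \<rightarrow> 0.
*)

theory Submission
  imports Defs
begin

definition square_integrable :: "'a measure \<Rightarrow> ('a \<Rightarrow> real) \<Rightarrow> bool" where
  "square_integrable M f \<longleftrightarrow> f \<in> borel_measurable M \<and> integrable M (\<lambda>x. (f x)\<^sup>2)"

lemma square_integrable_lin:
  assumes "square_integrable M f" "square_integrable M g"
  shows "square_integrable M (\<lambda>x. a * f x + b * g x)"
proof -
  have [measurable]: "f \<in> borel_measurable M" "g \<in> borel_measurable M"
    using assms by (auto simp: square_integrable_def)
  have "(a * f x + b * g x)\<^sup>2 \<le> 2 * a\<^sup>2 * (f x)\<^sup>2 + 2 * b\<^sup>2 * (g x)\<^sup>2" for x
  proof -
    have "(a * f x + b * g x)\<^sup>2 + (a * f x - b * g x)\<^sup>2 = 2 * a\<^sup>2 * (f x)\<^sup>2 + 2 * b\<^sup>2 * (g x)\<^sup>2"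
      by (simp add: power2_eq_square algebra_simps)
    then show ?thesis by (smt (verit) zero_le_power2)
  qed
  then have "AE x in M. norm ((a * f x + b * g x)\<^sup>2) \<le> norm (2 * a\<^sup>2 * (f x)\<^sup>2 + 2 * b\<^sup>2 * (g x)\<^sup>2)"
    by (intro AE_I2) simp
  moreover have "integrable M (\<lambda>x. 2 * a\<^sup>2 * (f x)\<^sup>2 + 2 * b\<^sup>2 * (g x)\<^sup>2)"
    using assms by (simp add: square_integrable_def)
  ultimately have "integrable M (\<lambda>x. (a * f x + b * g x)\<^sup>2)"
    by (rule Bochner_Integration.integrable_bound[rotated 2]) measurable
  then show ?thesis by (simp add: square_integrable_def)
qed

lemma (in finite_measure) square_integrable_const: "square_integrable M (\<lambda>_. c)"
  by (simp add: square_integrable_def)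

lemma (in finite_measure) integrable_square_integrable:
  "square_integrable M f \<Longrightarrow> integrable M f"
  unfolding square_integrable_def by (blast intro: square_integrable_imp_integrable)

lemma square_integrable_mult:
  assumes "square_integrable M f" "square_integrable M g"
  shows "integrable M (\<lambda>x. f x * g x)"
proof (rule Bochner_Integration.integrable_bound[where f="\<lambda>x. (f x)\<^sup>2 + (g x)\<^sup>2"])
  show "integrable M (\<lambda>x. (f x)\<^sup>2 + (g x)\<^sup>2)"
    using assms by (simp add: square_integrable_def)
  show "(\<lambda>x. f x * g x) \<in> borel_measurable M"
    using assms by (auto simp: square_integrable_def)
  have "\<bar>f x * g x\<bar> \<le> (f x)\<^sup>2 + (g x)\<^sup>2" for x
  proof -
    have "0 \<le> (\<bar>f x\<bar> - \<bar>g x\<bar>)\<^sup>2" by simp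
    then have "2 * \<bar>f x * g x\<bar> \<le> (f x)\<^sup>2 + (g x)\<^sup>2"
      by (simp add: power2_eq_square algebra_simps abs_mult)
    then show ?thesis by simp
  qed
  then show "AE x in M. norm (f x * g x) \<le> norm ((f x)\<^sup>2 + (g x)\<^sup>2)"
    by (auto intro!: AE_I2)
qed

lemma integral_abs_mult_le_sqrt:
  assumes f: "square_integrable M f" and g: "square_integrable M g"
  shows "(\<integral>x. \<bar>f x * g x\<bar> \<partial>M) \<le> sqrt (\<integral>x. (f x)\<^sup>2 \<partial>M) * sqrt (\<integral>x. (g x)\<^sup>2 \<partial>M)"
proof -
  have [measurable]: "f \<in> borel_measurable M" "g \<in> borel_measurable M"
    using f g by (auto simp: square_integrable_def)
  have sq: "(\<integral>\<^sup>+x. ennreal \<bar>h x\<bar> ^ 2 \<partial>M) = ennreal (\<integral>x. (h x)\<^sup>2 \<partial>M)"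
    if "square_integrable M h" for h
    using that by (subst nn_integral_eq_integral[symmetric])
                  (auto simp: ennreal_power square_integrable_def)
  have "(\<integral>\<^sup>+x. ennreal \<bar>f x\<bar> * ennreal \<bar>g x\<bar> \<partial>M) = ennreal (\<integral>x. \<bar>f x * g x\<bar> \<partial>M)"
    using integrable_abs[OF square_integrable_mult[OF f g]]
    by (subst nn_integral_eq_integral[symmetric]) (auto simp: ennreal_mult' abs_mult)
  with Cauchy_Schwarz_nn_integral[of "\<lambda>x. ennreal \<bar>f x\<bar>" M "\<lambda>x. ennreal \<bar>g x\<bar>"] sq[OF f] sq[OF g]
  have "ennreal ((\<integral>x. \<bar>f x * g x\<bar> \<partial>M)\<^sup>2) \<le> ennreal ((\<integral>x. (f x)\<^sup>2 \<partial>M) * (\<integral>x. (g x)\<^sup>2 \<partial>M))"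
    by (simp add: ennreal_power ennreal_mult integral_nonneg_AE)
  then have "(\<integral>x. \<bar>f x * g x\<bar> \<partial>M)\<^sup>2 \<le> (\<integral>x. (f x)\<^sup>2 \<partial>M) * (\<integral>x. (g x)\<^sup>2 \<partial>M)"
    by (subst (asm) ennreal_le_iff) (auto simp: integral_nonneg_AE)
  then have "sqrt ((\<integral>x. \<bar>f x * g x\<bar> \<partial>M)\<^sup>2) \<le> sqrt ((\<integral>x. (f x)\<^sup>2 \<partial>M) * (\<integral>x. (g x)\<^sup>2 \<partial>M))"
    by (rule real_sqrt_le_mono)
  then show ?thesis by (simp add: integral_nonneg_AE real_sqrt_mult)
qed

lemma abs_integral_mult_le_sqrt:
  assumes "square_integrable M f" "square_integrable M g"
  shows "\<bar>\<integral>x. f x * g x \<partial>M\<bar> \<le> sqrt (\<integral>x. (f x)\<^sup>2 \<partial>M) * sqrt (\<integral>x. (g x)\<^sup>2 \<partial>M)"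
  using integral_abs_bound integral_abs_mult_le_sqrt[OF assms] by (rule order_trans)

lemma integral_square_add_le:
  assumes "square_integrable M f" "square_integrable M g"
  shows "(\<integral>x. (f x + g x)\<^sup>2 \<partial>M) \<le> 2 * (\<integral>x. (f x)\<^sup>2 \<partial>M) + 2 * (\<integral>x. (g x)\<^sup>2 \<partial>M)"
proof -
  have "(\<integral>x. (f x + g x)\<^sup>2 \<partial>M) \<le> (\<integral>x. 2 * (f x)\<^sup>2 + 2 * (g x)\<^sup>2 \<partial>M)"
  proof (rule integral_mono)
    show "integrable M (\<lambda>x. (f x + g x)\<^sup>2)"
      using square_integrable_lin[OF assms, of 1 1] by (simp add: square_integrable_def)
    show "integrable M (\<lambda>x. 2 * (f x)\<^sup>2 + 2 * (g x)\<^sup>2)"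
      using assms by (simp add: square_integrable_def)
    show "(f x + g x)\<^sup>2 \<le> 2 * (f x)\<^sup>2 + 2 * (g x)\<^sup>2" for x
      using sum_squares_ge_zero[of "f x - g x" 0] by (simp add: power2_eq_square algebra_simps)
  qed
  then show ?thesis using assms by (simp add: square_integrable_def)
qed

lemma ennreal_suminf_square: "(\<Sum>i. f i :: ennreal)\<^sup>2 = (\<Sum>i. \<Sum>j. f i * f j)"
  by (simp add: power2_eq_square ennreal_suminf_cmult ennreal_suminf_multc)

lemma nn_integral_square_suminf_le:
  assumes y: "\<And>i. square_integrable M (y i)" and a: "\<And>i. 0 \<le> a i"
  shows "(\<integral>\<^sup>+x. (\<Sum>i. ennreal (a i * \<bar>y i x\<bar>))\<^sup>2 \<partial>M)
           \<le> (\<Sum>i. ennreal (a i * sqrt (\<integral>x. (y i x)\<^sup>2 \<partial>M)))\<^sup>2"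
proof -
  have [measurable]: "y i \<in> borel_measurable M" for i
    using y by (simp add: square_integrable_def)
  define c where "c i = a i * sqrt (\<integral>x. (y i x)\<^sup>2 \<partial>M)" for i
  have pair: "(\<integral>\<^sup>+x. ennreal (a i * \<bar>y i x\<bar>) * ennreal (a j * \<bar>y j x\<bar>) \<partial>M)
                \<le> ennreal (c i) * ennreal (c j)" for i j
  proof -
    have "(\<integral>\<^sup>+x. ennreal (a i * \<bar>y i x\<bar>) * ennreal (a j * \<bar>y j x\<bar>) \<partial>M)
        = (\<integral>\<^sup>+x. ennreal (a i * a j * \<bar>y i x * y j x\<bar>) \<partial>M)"
      using a by (intro nn_integral_cong) (simp add: ennreal_mult'[symmetric] abs_mult mult_ac)
    also have "\<dots> = ennreal (a i * a j * (\<integral>x. \<bar>y i x * y j x\<bar> \<partial>M))"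
      using square_integrable_mult[OF y y, of i j] a by (subst nn_integral_eq_integral) auto
    also have "\<dots> \<le> ennreal (c i * c j)"
      using integral_abs_mult_le_sqrt[OF y y, of i j] a
      by (intro ennreal_leI) (simp add: c_def mult_left_mono mult_ac)
    finally show ?thesis
      using a by (simp add: c_def ennreal_mult)
  qed
  have "(\<integral>\<^sup>+x. (\<Sum>i. ennreal (a i * \<bar>y i x\<bar>))\<^sup>2 \<partial>M)
      = (\<integral>\<^sup>+x. (\<Sum>i. \<Sum>j. ennreal (a i * \<bar>y i x\<bar>) * ennreal (a j * \<bar>y j x\<bar>)) \<partial>M)"
    by (simp only: ennreal_suminf_square)
  also have "\<dots> = (\<Sum>i. \<integral>\<^sup>+x. (\<Sum>j. ennreal (a i * \<bar>y i x\<bar>) * ennreal (a j * \<bar>y j x\<bar>)) \<partial>M)"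
    by (rule nn_integral_suminf) measurable
  also have "\<dots> = (\<Sum>i. \<Sum>j. \<integral>\<^sup>+x. ennreal (a i * \<bar>y i x\<bar>) * ennreal (a j * \<bar>y j x\<bar>) \<partial>M)"
    by (intro suminf_cong nn_integral_suminf) measurable
  also have "\<dots> \<le> (\<Sum>i. \<Sum>j. ennreal (c i) * ennreal (c j))"
    by (intro suminf_le summableI pair allI)
  finally show ?thesis
    by (simp add: ennreal_suminf_square c_def)
qed

lemma
  assumes y: "\<And>i. square_integrable M (y i)" and a: "\<And>i. 0 \<le> a i"
    and sm: "summable (\<lambda>i. a i * sqrt (\<integral>x. (y i x)\<^sup>2 \<partial>M))"
  shows AE_summable_series: "AE x in M. summable (\<lambda>i. \<bar>a i * y i x\<bar>)"
    and square_integrable_suminf: "square_integrable M (\<lambda>x. \<Sum>i. a i * y i x)"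
proof -
  have [measurable]: "y i \<in> borel_measurable M" for i
    using y by (simp add: square_integrable_def)
  define H where "H x = (\<Sum>i. ennreal (a i * \<bar>y i x\<bar>))" for x
  have "0 \<le> a i * sqrt (\<integral>x. (y i x)\<^sup>2 \<partial>M)" for i
    by (intro mult_nonneg_nonneg a real_sqrt_ge_zero integral_nonneg_AE) simp
  then have "(\<Sum>i. ennreal (a i * sqrt (\<integral>x. (y i x)\<^sup>2 \<partial>M))) \<noteq> \<top>"
    by (rule ennreal_suminf_neq_top[OF sm])
  then have "(\<Sum>i. ennreal (a i * sqrt (\<integral>x. (y i x)\<^sup>2 \<partial>M)))\<^sup>2 < \<top>"
    by (simp add: power2_eq_square ennreal_mult_eq_top_iff less_top[symmetric])
  with nn_integral_square_suminf_le[OF y a]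
  have H_finite: "(\<integral>\<^sup>+x. (H x)\<^sup>2 \<partial>M) < \<top>"
    unfolding H_def by (rule le_less_trans)
  have "AE x in M. (H x)\<^sup>2 \<noteq> \<infinity>"
  proof (rule nn_integral_PInf_AE)
    show "(\<lambda>x. (H x)\<^sup>2) \<in> borel_measurable M" unfolding H_def by measurable
    show "(\<integral>\<^sup>+x. (H x)\<^sup>2 \<partial>M) \<noteq> \<infinity>" using H_finite by simp
  qed
  then show summable: "AE x in M. summable (\<lambda>i. \<bar>a i * y i x\<bar>)"
  proof eventually_elim
    case (elim x)
    then have "(\<Sum>i. ennreal \<bar>a i * y i x\<bar>) \<noteq> \<top>"
      using a by (simp add: H_def abs_mult power2_eq_square ennreal_mult_eq_top_iff)
    then show ?case by (rule summable_suminf_not_top[rotated]) simp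
  qed
  have "AE x in M. ennreal (norm ((\<Sum>i. a i * y i x)\<^sup>2)) \<le> (H x)\<^sup>2"
    using summable
  proof eventually_elim
    case (elim x)
    have "ennreal \<bar>\<Sum>i. a i * y i x\<bar> \<le> ennreal (\<Sum>i. \<bar>a i * y i x\<bar>)"
      using summable_rabs[OF elim] by (rule ennreal_leI)
    also have "\<dots> = H x"
      unfolding H_def using a by (subst suminf_ennreal2[OF _ elim, symmetric]) (auto simp: abs_mult)
    finally have "(ennreal \<bar>\<Sum>i. a i * y i x\<bar>)\<^sup>2 \<le> (H x)\<^sup>2"
      by (rule power_mono) simp
    then show ?case by (simp add: ennreal_power)
  qed
  then have "(\<integral>\<^sup>+x. ennreal (norm ((\<Sum>i. a i * y i x)\<^sup>2)) \<partial>M) \<le> (\<integral>\<^sup>+x. (H x)\<^sup>2 \<partial>M)"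
    by (rule nn_integral_mono_AE)
  then have "(\<integral>\<^sup>+x. ennreal (norm ((\<Sum>i. a i * y i x)\<^sup>2)) \<partial>M) < \<top>"
    using H_finite by (rule le_less_trans)
  then have "integrable M (\<lambda>x. (\<Sum>i. a i * y i x)\<^sup>2)"
    by (intro integrableI_bounded) simp_all
  then show "square_integrable M (\<lambda>x. \<Sum>i. a i * y i x)"
    by (simp add: square_integrable_def)
qed

lemma integral_mult_suminf:
  assumes y: "\<And>i. square_integrable M (y i)" and a: "\<And>i. 0 \<le> a i"
    and sm: "summable (\<lambda>i. a i * sqrt (\<integral>x. (y i x)\<^sup>2 \<partial>M))"
    and h: "square_integrable M h"
  shows "(\<integral>x. h x * (\<Sum>i. a i * y i x) \<partial>M) = (\<Sum>i. a i * (\<integral>x. h x * y i x \<partial>M))"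
proof -
  have [measurable]: "y i \<in> borel_measurable M" for i
    using y by (simp add: square_integrable_def)
  have [measurable]: "h \<in> borel_measurable M"
    using h by (simp add: square_integrable_def)
  note summable = AE_summable_series[OF y a sm]
  have "(\<integral>x. h x * (\<Sum>i. a i * y i x) \<partial>M) = (\<integral>x. (\<Sum>i. h x * (a i * y i x)) \<partial>M)"
    using summable
    by (intro integral_cong_AE; (elim eventually_mono)?)
       (auto simp: suminf_mult summable_rabs_cancel)
  also have "\<dots> = (\<Sum>i. \<integral>x. h x * (a i * y i x) \<partial>M)"
  proof (rule integral_suminf)
    show "integrable M (\<lambda>x. h x * (a i * y i x))" for i
      using square_integrable_mult[OF h y, of i] by (simp add: mult.left_commute)
    show "AE x in M. summable (\<lambda>i. norm (h x * (a i * y i x)))"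
      using summable by eventually_elim (auto simp: abs_mult intro: summable_mult)
    show "summable (\<lambda>i. \<integral>x. norm (h x * (a i * y i x)) \<partial>M)"
    proof (rule summable_comparison_test')
      show "summable (\<lambda>i. sqrt (\<integral>x. (h x)\<^sup>2 \<partial>M) * (a i * sqrt (\<integral>x. (y i x)\<^sup>2 \<partial>M)))"
        using sm by (rule summable_mult)
      show "norm (\<integral>x. norm (h x * (a i * y i x)) \<partial>M)
              \<le> sqrt (\<integral>x. (h x)\<^sup>2 \<partial>M) * (a i * sqrt (\<integral>x. (y i x)\<^sup>2 \<partial>M))" for i
        using integral_abs_mult_le_sqrt[OF h y, of i] a[of i]
        by (auto simp: abs_mult integral_nonneg_AE mult.left_commute intro: mult_left_mono)
    qed
  qed
  finally show ?thesis by (simp add: mult.left_commute)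
qed

lemma abs_suminf_ge_dominant_term:
  fixes t :: "nat \<Rightarrow> real"
  assumes t: "\<And>i. \<bar>t i\<bar> \<le> c * (1/3)^i" and head: "\<bar>\<Sum>i<j. t i\<bar> \<le> 1" and tj: "t j = c / 3^j"
  shows "c / (2 * 3^j) - 1 \<le> \<bar>\<Sum>i. t i\<bar>"
proof -
  have "summable (\<lambda>i. c * (1/3)^i)"
    by (intro summable_mult summable_geometric) simp
  then have "summable t"
    by (rule summable_comparison_test'[where g="\<lambda>i. c * (1/3)^i"]) (use t in simp)
  then have split: "(\<Sum>i. t i) = (\<Sum>i. t (i + Suc j)) + (\<Sum>i<j. t i) + t j"
    using suminf_split_initial_segment[of t "Suc j"] by simp
  have "\<bar>\<Sum>i. t (i + Suc j)\<bar> \<le> (\<Sum>i. c * (1/3)^Suc j * (1/3)^i)"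
  proof (rule order_trans[OF summable_rabs])
    have le: "\<bar>t (i + Suc j)\<bar> \<le> c * (1/3)^Suc j * (1/3)^i" for i
      using t[of "i + Suc j"] by (simp add: power_add mult_ac)
    have sm: "summable (\<lambda>i. c * (1/3)^Suc j * (1/3)^i)"
      by (intro summable_mult summable_geometric) simp
    show abs_sm: "summable (\<lambda>i. \<bar>t (i + Suc j)\<bar>)"
      by (rule summable_comparison_test'[OF sm]) (use le in simp)
    show "(\<Sum>i. \<bar>t (i + Suc j)\<bar>) \<le> (\<Sum>i. c * (1/3)^Suc j * (1/3)^i)"
      by (rule suminf_le[OF le abs_sm sm])
  qed
  also have "\<dots> = c * (1/3)^Suc j * (3/2)"
    by (subst suminf_mult) (auto simp: suminf_geometric)
  also have "\<dots> = t j / 2"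
    by (simp add: tj power_one_over)
  finally show ?thesis
    using split head tj by simp
qed

text \<open>In the pairing of y j with \<Sum>i. a i * y i the diagonal term s j / 3^j dominates: the
  earlier terms contribute at most 1 and the later ones at most half of it.\<close>

lemma gliding_hump:
  fixes y :: "nat \<Rightarrow> 'a \<Rightarrow> real" and s a :: "nat \<Rightarrow> real"
  assumes s_def: "\<And>k. s k = sqrt (\<integral>x. (y k x)\<^sup>2 \<partial>M)" and a_def: "\<And>k. a k = 1 / (3^k * s k)"
    and y: "\<And>k. square_integrable M (y k)"
    and large: "\<And>k. 4 * 3^k \<le> s k"
    and head: "\<And>k. \<bar>\<integral>x. y k x * (\<Sum>i<k. a i * y i x) \<partial>M\<bar> \<le> 1"
  shows "square_integrable M (\<lambda>x. \<Sum>i. a i * y i x)"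
    and "1 \<le> \<bar>\<integral>x. y j x * (\<Sum>i. a i * y i x) \<partial>M\<bar>"
proof -
  have s_pos: "0 < s k" for k
    using large[of k] by (smt (verit) zero_less_power)
  have a_nonneg: "0 \<le> a k" for k
    using s_pos[of k] by (simp add: a_def)
  have as: "a k * s k = (1/3)^k" for k
    using s_pos[of k] by (simp add: a_def power_one_over)
  have summable: "summable (\<lambda>i. a i * sqrt (\<integral>x. (y i x)\<^sup>2 \<partial>M))"
    by (simp add: as summable_geometric flip: s_def)
  show "square_integrable M (\<lambda>x. \<Sum>i. a i * y i x)"
    by (rule square_integrable_suminf[OF y a_nonneg summable])
  define t where "t i = a i * (\<integral>x. y j x * y i x \<partial>M)" for i
  have "s j / (2 * 3^j) - 1 \<le> \<bar>\<Sum>i. t i\<bar>"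
  proof (rule abs_suminf_ge_dominant_term)
    show "\<bar>t i\<bar> \<le> s j * (1/3)^i" for i
    proof -
      have "\<bar>t i\<bar> \<le> a i * (s j * s i)"
        using abs_integral_mult_le_sqrt[OF y y, of j i] a_nonneg[of i]
        by (simp add: t_def abs_mult s_def mult_left_mono)
      then show ?thesis by (metis as mult.left_commute)
    qed
    have "(\<Sum>i<j. t i) = (\<integral>x. (\<Sum>i<j. a i * (y j x * y i x)) \<partial>M)"
      using square_integrable_mult[OF y y]
      by (subst Bochner_Integration.integral_sum) (auto simp: t_def)
    then show "\<bar>\<Sum>i<j. t i\<bar> \<le> 1"
      using head[of j] by (simp add: sum_distrib_left mult_ac)
    have "(\<integral>x. y j x * y j x \<partial>M) = (s j)\<^sup>2"
      by (simp add: s_def integral_nonneg_AE flip: power2_eq_square)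
    then show "t j = s j / 3^j"
      using s_pos[of j] by (simp add: t_def a_def power2_eq_square)
  qed
  moreover have "(\<integral>x. y j x * (\<Sum>i. a i * y i x) \<partial>M) = (\<Sum>i. t i)"
    unfolding t_def by (rule integral_mult_suminf[OF y a_nonneg summable y])
  moreover have "2 \<le> s j / (2 * 3^j)"
    using large[of j] by (simp add: field_simps)
  ultimately show "1 \<le> \<bar>\<integral>x. y j x * (\<Sum>i. a i * y i x) \<partial>M\<bar>"
    by fastforce
qed

lemma unbounded_seq_exceeds_beyond:
  fixes N :: "nat \<Rightarrow> real"
  assumes "\<not> (\<exists>C. \<forall>n. N n \<le> C)"
  shows "\<exists>n\<ge>T. C < N n"
proof (rule ccontr)
  assume small: "\<not> (\<exists>n\<ge>T. C < N n)"
  have "N n \<le> max C (Max (N ` {..T}))" for n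
  proof (cases "T \<le> n")
    case True
    with small have "N n \<le> C" by (simp add: not_less)
    then show ?thesis by simp
  next
    case False
    then have "N n \<le> Max (N ` {..T})" by (intro Max_ge) auto
    then show ?thesis by simp
  qed
  with assms show False by blast
qed

lemma hump_subsequence:
  fixes x :: "nat \<Rightarrow> 'a \<Rightarrow> real" and N :: "nat \<Rightarrow> real"
  assumes x: "\<And>n. square_integrable M (x n)"
    and weak: "\<And>g. square_integrable M g \<Longrightarrow> (\<lambda>n. \<integral>\<omega>. x n \<omega> * g \<omega> \<partial>M) \<longlonglongrightarrow> 0"
    and unbounded: "\<And>C T. \<exists>n\<ge>T. C < N n"
  obtains n :: "nat \<Rightarrow> nat" where "strict_mono n" and "\<And>k. 4 * 3^k \<le> N (n k)"
    and "\<And>k. \<bar>\<integral>\<omega>. x (n k) \<omega> * (\<Sum>i<k. 1 / (3^i * N (n i)) * x (n i) \<omega>) \<partial>M\<bar> \<le> 1"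
proof -
  \<comment> \<open>The state after step k is the pair (n_k, \<Sum>i<k. x (n_i) / (3^i N (n_i))).\<close>
  define P where "P k p \<longleftrightarrow> square_integrable M (snd p) \<and> 4 * 3^k \<le> N (fst p) \<and>
      \<bar>\<integral>\<omega>. x (fst p) \<omega> * snd p \<omega> \<partial>M\<bar> \<le> 1 \<and> (k = 0 \<longrightarrow> snd p = (\<lambda>_. 0))"
    for k :: nat and p :: "nat \<times> ('a \<Rightarrow> real)"
  define Q where "Q k p p' \<longleftrightarrow> fst p < fst p' \<and>
      snd p' = (\<lambda>\<omega>. snd p \<omega> + 1 / (3^k * N (fst p)) * x (fst p) \<omega>)"
    for k :: nat and p p' :: "nat \<times> ('a \<Rightarrow> real)"
  have "\<exists>p. P 0 p"
  proof -
    obtain m where "4 < N m" using unbounded[of 0 4] by blast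
    then have "P 0 (m, \<lambda>_. 0)" by (simp add: P_def square_integrable_def)
    then show ?thesis by blast
  qed
  moreover have "\<exists>p'. P (Suc k) p' \<and> Q k p p'" if "P k p" for k p
  proof -
    obtain m G where p: "p = (m, G)" by (cases p)
    define G' where "G' \<omega> = G \<omega> + 1 / (3^k * N m) * x m \<omega>" for \<omega>
    have G': "square_integrable M G'"
      using that square_integrable_lin[of M G "x m" 1 "1 / (3^k * N m)"] x
      unfolding G'_def P_def p by simp
    have "\<forall>\<^sub>F n in sequentially. \<bar>\<integral>\<omega>. x n \<omega> * G' \<omega> \<partial>M\<bar> < 1"
      using order_tendstoD(2)[OF tendsto_rabs[OF weak[OF G']]] by simp
    then obtain T where T: "\<And>n. T \<le> n \<Longrightarrow> \<bar>\<integral>\<omega>. x n \<omega> * G' \<omega> \<partial>M\<bar> < 1"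
      by (auto simp: eventually_sequentially)
    obtain n where "max T (Suc m) \<le> n" "4 * 3^Suc k < N n"
      using unbounded by blast
    then have "P (Suc k) (n, G') \<and> Q k p (n, G')"
      using G' T[of n] by (auto simp: P_def Q_def p G'_def)
    then show ?thesis by blast
  qed
  ultimately obtain f where f: "\<And>k. P k (f k) \<and> Q k (f k) (f (Suc k))"
    using dependent_nat_choice[of P Q] by blast
  have partial_sums: "snd (f k) = (\<lambda>\<omega>. \<Sum>i<k. 1 / (3^i * N (fst (f i))) * x (fst (f i)) \<omega>)" for k
  proof (induction k)
    case 0 then show ?case using f[of 0] by (simp add: P_def)
  next
    case (Suc k) then show ?case using f[of k] by (simp add: Q_def)
  qed
  show ?thesis
  proof (rule that)
    show "strict_mono (\<lambda>k. fst (f k))"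
      using f by (intro strict_monoI_Suc) (simp add: Q_def)
    show "4 * 3^k \<le> N (fst (f k))" for k
      using f[of k] by (simp add: P_def)
    show "\<bar>\<integral>\<omega>. x (fst (f k)) \<omega> * (\<Sum>i<k. 1 / (3^i * N (fst (f i))) * x (fst (f i)) \<omega>) \<partial>M\<bar> \<le> 1" for k
      using f[of k] partial_sums[of k] by (simp add: P_def)
  qed
qed

lemma weakly_null_imp_bounded:
  fixes x :: "nat \<Rightarrow> 'a \<Rightarrow> real"
  assumes x: "\<And>n. square_integrable M (x n)"
    and weak: "\<And>g. square_integrable M g \<Longrightarrow> (\<lambda>n. \<integral>\<omega>. x n \<omega> * g \<omega> \<partial>M) \<longlonglongrightarrow> 0"
  shows "\<exists>C. \<forall>n. (\<integral>\<omega>. (x n \<omega>)\<^sup>2 \<partial>M) \<le> C"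
proof (rule ccontr)
  define N where "N n = sqrt (\<integral>\<omega>. (x n \<omega>)\<^sup>2 \<partial>M)" for n
  assume "\<not> (\<exists>C. \<forall>n. (\<integral>\<omega>. (x n \<omega>)\<^sup>2 \<partial>M) \<le> C)"
  moreover have "(\<integral>\<omega>. (x n \<omega>)\<^sup>2 \<partial>M) \<le> C\<^sup>2" if "\<forall>n. N n \<le> C" for C n
  proof -
    have "0 \<le> (\<integral>\<omega>. (x n \<omega>)\<^sup>2 \<partial>M)" by (simp add: integral_nonneg_AE)
    then have "(\<integral>\<omega>. (x n \<omega>)\<^sup>2 \<partial>M) = (N n)\<^sup>2" by (simp add: N_def)
    also have "\<dots> \<le> C\<^sup>2"
      using that by (intro power_mono) (auto simp: N_def)
    finally show ?thesis .
  qed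
  ultimately have "\<not> (\<exists>C. \<forall>n. N n \<le> C)" by blast
  then have exceeds: "\<exists>n\<ge>T. C < N n" for C T
    by (rule unbounded_seq_exceeds_beyond)
  obtain n where n: "strict_mono n" "\<And>k. 4 * 3^k \<le> N (n k)"
    "\<And>k. \<bar>\<integral>\<omega>. x (n k) \<omega> * (\<Sum>i<k. 1 / (3^i * N (n i)) * x (n i) \<omega>) \<partial>M\<bar> \<le> 1"
    using hump_subsequence[OF x weak exceeds] by blast
  define g where "g \<omega> = (\<Sum>i. 1 / (3^i * N (n i)) * x (n i) \<omega>)" for \<omega>
  note gliding = gliding_hump[where y="\<lambda>k. x (n k)" and s="\<lambda>k. N (n k)"
      and a="\<lambda>k. 1 / (3^k * N (n k))", OF N_def refl x n(2,3)]
  have g: "square_integrable M g"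
    unfolding g_def by (rule gliding(1))
  have hump: "1 \<le> \<bar>\<integral>\<omega>. x (n j) \<omega> * g \<omega> \<partial>M\<bar>" for j
    unfolding g_def by (rule gliding(2))
  have "(\<lambda>j. \<integral>\<omega>. x (n j) \<omega> * g \<omega> \<partial>M) \<longlonglongrightarrow> 0"
    using LIMSEQ_subseq_LIMSEQ[OF weak[OF g] n(1)] by (simp add: o_def)
  then have "\<forall>\<^sub>F j in sequentially. \<bar>\<integral>\<omega>. x (n j) \<omega> * g \<omega> \<partial>M\<bar> < 1"
    using order_tendstoD(2)[OF tendsto_rabs, of _ 0 sequentially 1] by simp
  then obtain j where "\<bar>\<integral>\<omega>. x (n j) \<omega> * g \<omega> \<partial>M\<bar> < 1"
    by (auto simp: eventually_sequentially)
  with hump[of j] show False by simp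
qed

lemma weakly_null_at_right_imp_bounded:
  fixes z :: "real \<Rightarrow> 'a \<Rightarrow> real"
  assumes z: "\<And>\<eta>. 0 < \<eta> \<Longrightarrow> square_integrable M (z \<eta>)"
    and weak: "\<And>g. square_integrable M g \<Longrightarrow> ((\<lambda>\<eta>. \<integral>\<omega>. z \<eta> \<omega> * g \<omega> \<partial>M) \<longlongrightarrow> 0) (at_right 0)"
  shows "\<exists>C. \<forall>\<^sub>F \<eta> in at_right 0. (\<integral>\<omega>. (z \<eta> \<omega>)\<^sup>2 \<partial>M) \<le> C"
proof (rule ccontr)
  assume unbounded: "\<not> ?thesis"
  have "\<forall>k. \<exists>\<eta>. 0 < \<eta> \<and> \<eta> < inverse (real (Suc k)) \<and> real k < (\<integral>\<omega>. (z \<eta> \<omega>)\<^sup>2 \<partial>M)"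
  proof
    fix k
    have "\<not> (\<forall>\<^sub>F \<eta> in at_right 0. (\<integral>\<omega>. (z \<eta> \<omega>)\<^sup>2 \<partial>M) \<le> real k)"
      using unbounded by blast
    moreover have "0 < inverse (real (Suc k))" by simp
    ultimately show "\<exists>\<eta>. 0 < \<eta> \<and> \<eta> < inverse (real (Suc k)) \<and> real k < (\<integral>\<omega>. (z \<eta> \<omega>)\<^sup>2 \<partial>M)"
      unfolding eventually_at_right_field not_le[symmetric] by blast
  qed
  then obtain e where e: "\<And>k. 0 < e k" "\<And>k. e k < inverse (real (Suc k))"
      "\<And>k. real k < (\<integral>\<omega>. (z (e k) \<omega>)\<^sup>2 \<partial>M)"
    by metis
  have "e \<longlonglongrightarrow> 0"
    by (rule tendsto_sandwich[OF _ _ tendsto_const LIMSEQ_inverse_real_of_nat])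
       (use e in \<open>auto intro!: always_eventually less_imp_le\<close>)
  then have e_lim: "filterlim e (at_right 0) sequentially"
    by (rule tendsto_imp_filterlim_at_right) (use e in auto)
  have "\<exists>C. \<forall>k. (\<integral>\<omega>. (z (e k) \<omega>)\<^sup>2 \<partial>M) \<le> C"
  proof (rule weakly_null_imp_bounded)
    show "square_integrable M (z (e k))" for k
      using z e(1) by blast
    show "(\<lambda>k. \<integral>\<omega>. z (e k) \<omega> * g \<omega> \<partial>M) \<longlonglongrightarrow> 0" if "square_integrable M g" for g
      using filterlim_compose[OF weak[OF that] e_lim] by (simp add: o_def)
  qed
  then obtain C where C: "\<And>k. (\<integral>\<omega>. (z (e k) \<omega>)\<^sup>2 \<partial>M) \<le> C" by blast
  obtain k :: nat where "C < real k" using reals_Archimedean2 by blast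
  with C[of k] e(3)[of k] show False by linarith
qed

lemma (in finite_measure) square_integrable_bounded:
  assumes "f \<in> borel_measurable M" "AE x in M. \<bar>f x\<bar> \<le> c"
  shows "square_integrable M f"
proof -
  have "AE x in M. norm ((f x)\<^sup>2) \<le> c\<^sup>2"
    using assms(2)
  proof eventually_elim
    case (elim x)
    then have "\<bar>f x\<bar>\<^sup>2 \<le> c\<^sup>2" by (intro power_mono) auto
    then show ?case by simp
  qed
  then have "integrable M (\<lambda>x. (f x)\<^sup>2)"
    by (rule integrable_const_bound) (use assms(1) in measurable)
  with assms(1) show ?thesis
    by (simp add: square_integrable_def)
qed

lemma (in prob_space) integral_abs_le_sqrt_integral_square:
  assumes "square_integrable M f"
  shows "(\<integral>x. \<bar>f x\<bar> \<partial>M) \<le> sqrt (\<integral>x. (f x)\<^sup>2 \<partial>M)"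
  using integral_abs_mult_le_sqrt[OF assms square_integrable_const[of 1]] by (simp add: prob_space)

lemma tendsto_integral_square:
  assumes X: "\<forall>\<^sub>F \<eta> in F. square_integrable M (X \<eta>)" and Y: "square_integrable M Y"
    and lim: "((\<lambda>\<eta>. \<integral>x. (X \<eta> x - Y x)\<^sup>2 \<partial>M) \<longlongrightarrow> 0) F"
  shows "((\<lambda>\<eta>. \<integral>x. (X \<eta> x)\<^sup>2 \<partial>M) \<longlongrightarrow> (\<integral>x. (Y x)\<^sup>2 \<partial>M)) F"
proof -
  define D where "D \<eta> = (\<integral>x. (X \<eta> x - Y x)\<^sup>2 \<partial>M)" for \<eta>
  define nY where "nY = sqrt (\<integral>x. (Y x)\<^sup>2 \<partial>M)"
  have "((\<lambda>\<eta>. (\<integral>x. (X \<eta> x)\<^sup>2 \<partial>M) - (\<integral>x. (Y x)\<^sup>2 \<partial>M)) \<longlongrightarrow> 0) F"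
  proof (rule Lim_null_comparison)
    show "\<forall>\<^sub>F \<eta> in F. norm ((\<integral>x. (X \<eta> x)\<^sup>2 \<partial>M) - (\<integral>x. (Y x)\<^sup>2 \<partial>M)) \<le> D \<eta> + 2 * (sqrt (D \<eta>) * nY)"
      using X
    proof eventually_elim
      case (elim \<eta>)
      have XY: "square_integrable M (\<lambda>x. X \<eta> x - Y x)"
        using square_integrable_lin[OF elim Y, of 1 "-1"] by simp
      have "(\<integral>x. (X \<eta> x)\<^sup>2 \<partial>M) - (\<integral>x. (Y x)\<^sup>2 \<partial>M)
          = (\<integral>x. (X \<eta> x - Y x)\<^sup>2 + 2 * ((X \<eta> x - Y x) * Y x) \<partial>M)"
        using elim Y square_integrable_mult[OF XY Y]
        by (subst Bochner_Integration.integral_diff[symmetric])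
           (auto simp: square_integrable_def power2_eq_square algebra_simps intro!: Bochner_Integration.integral_cong)
      also have "\<dots> = D \<eta> + 2 * (\<integral>x. (X \<eta> x - Y x) * Y x \<partial>M)"
        using XY square_integrable_mult[OF XY Y] by (simp add: D_def square_integrable_def)
      finally have eq: "(\<integral>x. (X \<eta> x)\<^sup>2 \<partial>M) - (\<integral>x. (Y x)\<^sup>2 \<partial>M)
          = D \<eta> + 2 * (\<integral>x. (X \<eta> x - Y x) * Y x \<partial>M)" .
      have "\<bar>\<integral>x. (X \<eta> x - Y x) * Y x \<partial>M\<bar> \<le> sqrt (D \<eta>) * nY"
        using abs_integral_mult_le_sqrt[OF XY Y] by (simp add: D_def nY_def)
      moreover have "0 \<le> D \<eta>"
        unfolding D_def by (simp add: integral_nonneg_AE)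
      ultimately show ?case
        unfolding eq real_norm_def by linarith
    qed
    have "((\<lambda>\<eta>. D \<eta> + 2 * (sqrt (D \<eta>) * nY)) \<longlongrightarrow> 0 + 2 * (sqrt 0 * nY)) F"
      using lim unfolding D_def by (intro tendsto_intros)
    then show "((\<lambda>\<eta>. D \<eta> + 2 * (sqrt (D \<eta>) * nY)) \<longlongrightarrow> 0) F" by simp
  qed
  then show ?thesis by (simp add: LIM_zero_iff)
qed

lemma tendsto_integral_truncation_zero:
  fixes f :: "'a \<Rightarrow> real"
  assumes f: "integrable M f" "\<And>x. 0 \<le> f x"
  shows "(\<lambda>k. \<integral>x. f x - min (f x) (real k) \<partial>M) \<longlonglongrightarrow> 0"
proof -
  have "(\<lambda>k. \<integral>x. f x - min (f x) (real k) \<partial>M) \<longlonglongrightarrow> (\<integral>x. 0 \<partial>M)"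
  proof (rule integral_dominated_convergence[where w=f])
    show "AE x in M. (\<lambda>k. f x - min (f x) (real k)) \<longlonglongrightarrow> 0"
    proof (rule AE_I2)
      fix x
      obtain N :: nat where "f x \<le> real N" using real_arch_simple by blast
      then have "\<forall>k\<ge>N. f x - min (f x) (real k) = 0" by auto
      then show "(\<lambda>k. f x - min (f x) (real k)) \<longlonglongrightarrow> 0"
        by (intro tendsto_eventually) (auto simp: eventually_sequentially)
    qed
    show "AE x in M. norm (f x - min (f x) (real k)) \<le> f x" for k
      using f(2) by (intro AE_I2) auto
  qed (use f(1) in auto)
  then show ?thesis by simp
qed

lemma (in finite_measure) integral_abs_mult_le_truncation:
  assumes f: "integrable M f" "\<And>x. 0 \<le> f x"
    and u: "u \<in> borel_measurable M" "AE x in M. \<bar>u x\<bar> \<le> c"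
  shows "(\<integral>x. \<bar>u x\<bar> * f x \<partial>M)
           \<le> real k * (\<integral>x. \<bar>u x\<bar> \<partial>M) + \<bar>c\<bar> * (\<integral>x. f x - min (f x) (real k) \<partial>M)"
proof -
  have [measurable]: "f \<in> borel_measurable M" "u \<in> borel_measurable M" using f(1) u(1) by simp_all
  have tail_int: "integrable M (\<lambda>x. f x - min (f x) (real k))"
  proof (rule Bochner_Integration.integrable_bound[OF f(1)])
    show "AE x in M. norm (f x - min (f x) (real k)) \<le> norm (f x)"
      by (intro AE_I2) (simp add: f(2))
  qed measurable
  have u_int: "integrable M (\<lambda>x. \<bar>u x\<bar>)"
    by (rule integrable_const_bound[where B=c]) (use u(2) in auto)
  have uf_int: "integrable M (\<lambda>x. \<bar>u x\<bar> * f x)"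
  proof (rule Bochner_Integration.integrable_bound[where f="\<lambda>x. \<bar>c\<bar> * f x"])
    show "AE x in M. norm (\<bar>u x\<bar> * f x) \<le> norm (\<bar>c\<bar> * f x)"
      using u(2) by eventually_elim (use f(2) in \<open>auto simp: abs_mult intro!: mult_right_mono\<close>)
  qed (use f(1) in simp_all)
  have "(\<integral>x. \<bar>u x\<bar> * f x \<partial>M) \<le> (\<integral>x. real k * \<bar>u x\<bar> + \<bar>c\<bar> * (f x - min (f x) (real k)) \<partial>M)"
  proof (rule integral_mono_AE[OF uf_int])
    show "integrable M (\<lambda>x. real k * \<bar>u x\<bar> + \<bar>c\<bar> * (f x - min (f x) (real k)))"
      using u_int tail_int by simp
    show "AE x in M. \<bar>u x\<bar> * f x \<le> real k * \<bar>u x\<bar> + \<bar>c\<bar> * (f x - min (f x) (real k))"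
      using u(2)
    proof eventually_elim
      case (elim x)
      have "\<bar>u x\<bar> * min (f x) (real k) \<le> real k * \<bar>u x\<bar>"
        by (subst mult.commute) (intro mult_right_mono, auto)
      moreover have "\<bar>u x\<bar> * (f x - min (f x) (real k)) \<le> \<bar>c\<bar> * (f x - min (f x) (real k))"
        using elim by (intro mult_right_mono) auto
      ultimately show ?case
        by (simp add: right_diff_distrib)
    qed
  qed
  also have "\<dots> = real k * (\<integral>x. \<bar>u x\<bar> \<partial>M) + \<bar>c\<bar> * (\<integral>x. f x - min (f x) (real k) \<partial>M)"
    using u_int tail_int by simp
  finally show ?thesis .
qed

lemma (in finite_measure) tendsto_integral_abs_mult_zero:
  fixes u :: "'b \<Rightarrow> 'a \<Rightarrow> real"
  assumes f: "integrable M f" "\<And>x. 0 \<le> f x"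
    and u: "\<forall>\<^sub>F \<eta> in F. u \<eta> \<in> borel_measurable M \<and> (AE x in M. \<bar>u \<eta> x\<bar> \<le> c)"
    and lim: "((\<lambda>\<eta>. \<integral>x. \<bar>u \<eta> x\<bar> \<partial>M) \<longlongrightarrow> 0) F"
  shows "((\<lambda>\<eta>. \<integral>x. \<bar>u \<eta> x\<bar> * f x \<partial>M) \<longlongrightarrow> 0) F"
proof (rule tendstoI)
  fix e :: real assume "0 < e"
  have "\<forall>\<^sub>F k in sequentially. \<bar>c\<bar> * (\<integral>x. f x - min (f x) (real k) \<partial>M) < e / 2"
    using tendsto_mult_right_zero[OF tendsto_integral_truncation_zero[OF f], where c="\<bar>c\<bar>"]
    by (rule order_tendstoD(2)) (simp add: \<open>0 < e\<close>)
  then obtain k where k: "\<bar>c\<bar> * (\<integral>x. f x - min (f x) (real k) \<partial>M) < e / 2"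
    by (auto simp: eventually_sequentially)
  have "\<forall>\<^sub>F \<eta> in F. real k * (\<integral>x. \<bar>u \<eta> x\<bar> \<partial>M) < e / 2"
    using tendsto_mult_right_zero[OF lim, where c="real k"]
    by (rule order_tendstoD(2)) (simp add: \<open>0 < e\<close>)
  with u show "\<forall>\<^sub>F \<eta> in F. dist (\<integral>x. \<bar>u \<eta> x\<bar> * f x \<partial>M) 0 < e"
  proof eventually_elim
    case (elim \<eta>)
    then have "(\<integral>x. \<bar>u \<eta> x\<bar> * f x \<partial>M) < e"
      using integral_abs_mult_le_truncation[OF f, of "u \<eta>" c k] k by linarith
    then show ?case
      using f(2) by (simp add: integral_nonneg_AE)
  qed
qed

lemma borel_measurable_smooth_fun:
  assumes "smooth_fun \<phi>"
  shows "\<phi> \<in> borel_measurable borel"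
proof -
  have "\<phi> differentiable (at x)" for x
    using assms unfolding smooth_fun_def by (metis funpow_0)
  then have "continuous_on UNIV \<phi>"
    by (intro continuous_at_imp_continuous_on) (auto intro: differentiable_imp_continuous_within)
  then show ?thesis by (rule borel_measurable_continuous_onI)
qed

lemma smooth_fun_taylor_remainder:
  fixes \<phi> :: "real \<Rightarrow> real"
  assumes "smooth_fun \<phi>"
  obtains K where "0 \<le> K" and "\<And>y. \<bar>y\<bar> \<le> c \<Longrightarrow>
    \<bar>\<phi> y - \<phi> 0 - deriv \<phi> 0 * y - (deriv ^^ 2) \<phi> 0 / 2 * y\<^sup>2\<bar> \<le> K * \<bar>y\<bar>^3"
proof -
  define d where "d m = (deriv ^^ m) \<phi>" for m
  have D: "\<forall>m x. DERIV (d m) x :> d (Suc m) x"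
    using assms unfolding smooth_fun_def d_def by (auto simp: DERIV_deriv_iff_real_differentiable)
  have "continuous_on {-c..c} (d 3)"
    using D by (intro continuous_at_imp_continuous_on) (auto intro: DERIV_isCont)
  then have "bounded (d 3 ` {-c..c})"
    by (intro compact_imp_bounded compact_continuous_image compact_Icc)
  then obtain K0 where K0: "\<forall>t\<in>{-c..c}. \<bar>d 3 t\<bar> \<le> K0"
    unfolding bounded_iff by auto
  show ?thesis
  proof
    show "0 \<le> max K0 0 / 6" by simp
    fix y :: real assume y: "\<bar>y\<bar> \<le> c"
    obtain t where t: "\<bar>t\<bar> \<le> \<bar>y\<bar>"
      and taylor: "\<phi> y = (\<Sum>m<3. d m 0 / fact m * y ^ m) + d 3 t / fact 3 * y ^ 3"
      using Maclaurin_all_le[of d \<phi>, OF _ D, of y 3] by (auto simp: d_def)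
    have "t \<in> {-c..c}" using t y by auto
    with K0 have "\<bar>d 3 t\<bar> \<le> max K0 0" by fastforce
    have eq: "\<phi> y - \<phi> 0 - deriv \<phi> 0 * y - (deriv ^^ 2) \<phi> 0 / 2 * y\<^sup>2 = d 3 t / 6 * y ^ 3"
      using taylor by (simp add: d_def eval_nat_numeral fact_numeral power2_eq_square)
    have "\<bar>d 3 t / 6 * y ^ 3\<bar> = \<bar>d 3 t\<bar> / 6 * \<bar>y\<bar>^3"
      by (simp add: abs_mult power_abs)
    also have "\<dots> \<le> max K0 0 / 6 * \<bar>y\<bar>^3"
      using \<open>\<bar>d 3 t\<bar> \<le> max K0 0\<close> by (intro mult_right_mono divide_right_mono) auto
    finally show "\<bar>\<phi> y - \<phi> 0 - deriv \<phi> 0 * y - (deriv ^^ 2) \<phi> 0 / 2 * y\<^sup>2\<bar> \<le> max K0 0 / 6 * \<bar>y\<bar>^3"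
      unfolding eq .
  qed
qed

lemma (in prob_space) smooth_fun_expectation_remainder:
  assumes \<phi>: "smooth_fun \<phi>"
  obtains K where "0 \<le> K" and "\<And>X. X \<in> borel_measurable M \<Longrightarrow> AE \<omega> in M. \<bar>X \<omega>\<bar> \<le> c \<Longrightarrow>
    \<bar>(\<integral>\<omega>. \<phi> (X \<omega>) \<partial>M) - \<phi> 0 - deriv \<phi> 0 * (\<integral>\<omega>. X \<omega> \<partial>M)
       - (deriv ^^ 2) \<phi> 0 / 2 * (\<integral>\<omega>. (X \<omega>)\<^sup>2 \<partial>M)\<bar> \<le> K * (\<integral>\<omega>. \<bar>X \<omega>\<bar>^3 \<partial>M)"
proof -
  define r where "r y = \<phi> y - \<phi> 0 - deriv \<phi> 0 * y - (deriv ^^ 2) \<phi> 0 / 2 * y\<^sup>2" for y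
  obtain K where "0 \<le> K" and K: "\<And>y. \<bar>y\<bar> \<le> c \<Longrightarrow> \<bar>r y\<bar> \<le> K * \<bar>y\<bar>^3"
    using smooth_fun_taylor_remainder[OF \<phi>] unfolding r_def by blast
  have [measurable]: "\<phi> \<in> borel_measurable borel"
    by (rule borel_measurable_smooth_fun[OF \<phi>])
  show ?thesis
  proof (rule that[OF \<open>0 \<le> K\<close>])
    fix X assume [measurable]: "X \<in> borel_measurable M" and bound: "AE \<omega> in M. \<bar>X \<omega>\<bar> \<le> c"
    have bounded_int: "integrable M (\<lambda>\<omega>. g (X \<omega>))"
      if [measurable]: "g \<in> borel_measurable borel" and "\<And>y. \<bar>y\<bar> \<le> c \<Longrightarrow> \<bar>g y\<bar> \<le> b"
      for g :: "real \<Rightarrow> real" and b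
      by (rule integrable_const_bound[where B=b]) (use bound that(2) in auto)
    have pow_le: "\<bar>y\<bar> ^ n \<le> \<bar>c\<bar> ^ n" if "\<bar>y\<bar> \<le> c" for y :: real and n
      using that by (intro power_mono) auto
    have r_int: "integrable M (\<lambda>\<omega>. r (X \<omega>))"
    proof (rule bounded_int)
      show "r \<in> borel_measurable borel" unfolding r_def by measurable
      show "\<bar>r y\<bar> \<le> K * \<bar>c\<bar>^3" if "\<bar>y\<bar> \<le> c" for y
        using K[OF that] pow_le[OF that, of 3] \<open>0 \<le> K\<close> by (meson mult_left_mono order_trans)
    qed
    have int: "integrable M (\<lambda>\<omega>. X \<omega>)" "integrable M (\<lambda>\<omega>. (X \<omega>)\<^sup>2)"
      "integrable M (\<lambda>\<omega>. \<bar>X \<omega>\<bar>^3)"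
      using bounded_int[of "\<lambda>y. y" c] bounded_int[of "\<lambda>y. y\<^sup>2" "\<bar>c\<bar>\<^sup>2"]
        bounded_int[of "\<lambda>y. \<bar>y\<bar>^3" "\<bar>c\<bar>^3"] pow_le[of _ 2] pow_le[of _ 3]
      by auto
    have "(\<integral>\<omega>. \<phi> (X \<omega>) \<partial>M) - \<phi> 0 - deriv \<phi> 0 * (\<integral>\<omega>. X \<omega> \<partial>M)
        - (deriv ^^ 2) \<phi> 0 / 2 * (\<integral>\<omega>. (X \<omega>)\<^sup>2 \<partial>M) = (\<integral>\<omega>. r (X \<omega>) \<partial>M)"
    proof -
      have "integrable M (\<lambda>\<omega>. r (X \<omega>) + \<phi> 0 + deriv \<phi> 0 * X \<omega> + (deriv ^^ 2) \<phi> 0 / 2 * (X \<omega>)\<^sup>2)"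
        using int r_int by simp
      then have "integrable M (\<lambda>\<omega>. \<phi> (X \<omega>))"
        by (simp add: r_def)
      then show ?thesis
        using int(1,2) by (simp add: r_def prob_space)
    qed
    also have "\<bar>\<dots>\<bar> \<le> (\<integral>\<omega>. K * \<bar>X \<omega>\<bar>^3 \<partial>M)"
      using int r_int bound K by (intro order_trans[OF integral_abs_bound] integral_mono_AE) auto
    finally show "\<bar>(\<integral>\<omega>. \<phi> (X \<omega>) \<partial>M) - \<phi> 0 - deriv \<phi> 0 * (\<integral>\<omega>. X \<omega> \<partial>M)
       - (deriv ^^ 2) \<phi> 0 / 2 * (\<integral>\<omega>. (X \<omega>)\<^sup>2 \<partial>M)\<bar> \<le> K * (\<integral>\<omega>. \<bar>X \<omega>\<bar>^3 \<partial>M)"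
      by simp
  qed
qed

lemma abs_mult_square_le:
  fixes b x y :: real
  assumes "\<bar>b\<bar> \<le> c"
  shows "\<bar>b\<bar> * x\<^sup>2 \<le> 2 * c * (x - y)\<^sup>2 + 2 * (\<bar>b\<bar> * y\<^sup>2)"
proof -
  have "x\<^sup>2 \<le> 2 * (x - y)\<^sup>2 + 2 * y\<^sup>2"
    using sum_squares_ge_zero[of "x - 2 * y" 0] by (simp add: power2_eq_square algebra_simps)
  then have "\<bar>b\<bar> * x\<^sup>2 \<le> 2 * (\<bar>b\<bar> * (x - y)\<^sup>2) + 2 * (\<bar>b\<bar> * y\<^sup>2)"
    by (metis abs_ge_zero distrib_left mult.left_commute mult_left_mono)
  also have "\<dots> \<le> 2 * c * (x - y)\<^sup>2 + 2 * (\<bar>b\<bar> * y\<^sup>2)"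
    using assms by (simp add: mult_right_mono)
  finally show ?thesis .
qed

lemma (in prob_space) tendsto_second_moment_div_square:
  fixes B :: "real \<Rightarrow> 'a \<Rightarrow> real"
  assumes B: "\<And>\<eta>. 0 < \<eta> \<Longrightarrow> square_integrable M (B \<eta>)"
    and B0: "square_integrable M B0"
    and L2: "((\<lambda>\<eta>. \<integral>\<omega>. (B \<eta> \<omega> / \<eta> - B0 \<omega>)\<^sup>2 \<partial>M) \<longlongrightarrow> 0) (at_right 0)"
  shows "((\<lambda>\<eta>. (\<integral>\<omega>. (B \<eta> \<omega>)\<^sup>2 \<partial>M) / \<eta>\<^sup>2) \<longlongrightarrow> (\<integral>\<omega>. (B0 \<omega>)\<^sup>2 \<partial>M)) (at_right 0)"
proof -
  have "\<forall>\<^sub>F \<eta> in at_right 0. square_integrable M (\<lambda>\<omega>. B \<eta> \<omega> / \<eta>)"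
    using eventually_at_right_less
  proof eventually_elim
    case (elim \<eta>)
    show ?case
      using square_integrable_lin[OF B[OF elim] B[OF elim], of "1 / \<eta>" 0] by simp
  qed
  then have "((\<lambda>\<eta>. \<integral>\<omega>. (B \<eta> \<omega> / \<eta>)\<^sup>2 \<partial>M) \<longlongrightarrow> (\<integral>\<omega>. (B0 \<omega>)\<^sup>2 \<partial>M)) (at_right 0)"
    by (rule tendsto_integral_square[OF _ B0 L2])
  then show ?thesis
    by (simp add: power_divide)
qed

lemma (in prob_space) tendsto_integral_abs_zero:
  fixes B :: "real \<Rightarrow> 'a \<Rightarrow> real"
  assumes B: "\<And>\<eta>. 0 < \<eta> \<Longrightarrow> square_integrable M (B \<eta>)"
    and B0: "square_integrable M B0"
    and L2: "((\<lambda>\<eta>. \<integral>\<omega>. (B \<eta> \<omega> / \<eta> - B0 \<omega>)\<^sup>2 \<partial>M) \<longlongrightarrow> 0) (at_right 0)"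
  shows "((\<lambda>\<eta>. \<integral>\<omega>. \<bar>B \<eta> \<omega>\<bar> \<partial>M) \<longlongrightarrow> 0) (at_right 0)"
proof (rule Lim_null_comparison)
  show "\<forall>\<^sub>F \<eta> in at_right 0. norm (\<integral>\<omega>. \<bar>B \<eta> \<omega>\<bar> \<partial>M) \<le> \<eta> * sqrt ((\<integral>\<omega>. (B \<eta> \<omega>)\<^sup>2 \<partial>M) / \<eta>\<^sup>2)"
    using eventually_at_right_less
  proof eventually_elim
    case (elim \<eta>)
    then have "\<eta> * sqrt ((\<integral>\<omega>. (B \<eta> \<omega>)\<^sup>2 \<partial>M) / \<eta>\<^sup>2) = sqrt (\<integral>\<omega>. (B \<eta> \<omega>)\<^sup>2 \<partial>M)"
      by (simp add: real_sqrt_divide)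
    then show ?case
      using integral_abs_le_sqrt_integral_square[OF B[OF elim]] by (simp add: integral_nonneg_AE)
  qed
  show "((\<lambda>\<eta>. \<eta> * sqrt ((\<integral>\<omega>. (B \<eta> \<omega>)\<^sup>2 \<partial>M) / \<eta>\<^sup>2)) \<longlongrightarrow> 0) (at_right 0)"
    using tendsto_mult[OF tendsto_ident_at tendsto_real_sqrt[OF tendsto_second_moment_div_square[OF B B0 L2]]]
    by simp
qed

lemma (in finite_measure) integral_abs_cube_div_le:
  assumes X: "X \<in> borel_measurable M" and bound: "AE \<omega> in M. \<bar>X \<omega>\<bar> \<le> c"
    and B0: "square_integrable M B0" and "0 < \<eta>"
  shows "(\<integral>\<omega>. \<bar>X \<omega>\<bar>^3 \<partial>M) / \<eta>\<^sup>2
           \<le> 2 * \<bar>c\<bar> * (\<integral>\<omega>. (X \<omega> / \<eta> - B0 \<omega>)\<^sup>2 \<partial>M) + 2 * (\<integral>\<omega>. \<bar>X \<omega>\<bar> * (B0 \<omega>)\<^sup>2 \<partial>M)"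
proof -
  have [measurable]: "B0 \<in> borel_measurable M" "X \<in> borel_measurable M"
    using B0 X by (simp_all add: square_integrable_def)
  have diff_sq: "square_integrable M (\<lambda>\<omega>. X \<omega> / \<eta> - B0 \<omega>)"
    using square_integrable_lin[OF square_integrable_bounded[OF X bound] B0, of "1 / \<eta>" "-1"] by simp
  have weighted_int: "integrable M (\<lambda>\<omega>. \<bar>X \<omega>\<bar> * (B0 \<omega>)\<^sup>2)"
  proof (rule Bochner_Integration.integrable_bound[where f="\<lambda>\<omega>. \<bar>c\<bar> * (B0 \<omega>)\<^sup>2"])
    show "AE \<omega> in M. norm (\<bar>X \<omega>\<bar> * (B0 \<omega>)\<^sup>2) \<le> norm (\<bar>c\<bar> * (B0 \<omega>)\<^sup>2)"
      using bound by eventually_elim (auto simp: abs_mult intro!: mult_right_mono)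
  qed (use B0 in \<open>simp_all add: square_integrable_def\<close>)
  have cube_eq: "\<bar>X \<omega>\<bar>^3 / \<eta>\<^sup>2 = \<bar>X \<omega>\<bar> * (X \<omega> / \<eta>)\<^sup>2" for \<omega>
    by (simp add: power_divide power2_eq_square power3_eq_cube abs_mult_self_eq mult.assoc)
  have "AE \<omega> in M. norm (\<bar>X \<omega>\<bar>^3) \<le> \<bar>c\<bar>^3"
    using bound by eventually_elim (auto intro: power_mono)
  then have "integrable M (\<lambda>\<omega>. \<bar>X \<omega>\<bar>^3)"
    by (rule integrable_const_bound) measurable
  then have cube_int: "integrable M (\<lambda>\<omega>. \<bar>X \<omega>\<bar> * (X \<omega> / \<eta>)\<^sup>2)"
    by (simp flip: cube_eq)
  have "(\<integral>\<omega>. \<bar>X \<omega>\<bar>^3 \<partial>M) / \<eta>\<^sup>2 = (\<integral>\<omega>. \<bar>X \<omega>\<bar> * (X \<omega> / \<eta>)\<^sup>2 \<partial>M)"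
    by (simp flip: cube_eq)
  also have "\<dots> \<le> (\<integral>\<omega>. 2 * \<bar>c\<bar> * (X \<omega> / \<eta> - B0 \<omega>)\<^sup>2 + 2 * (\<bar>X \<omega>\<bar> * (B0 \<omega>)\<^sup>2) \<partial>M)"
    using cube_int diff_sq weighted_int bound
    by (intro integral_mono_AE) (auto simp: square_integrable_def intro!: abs_mult_square_le
        elim!: eventually_mono)
  also have "\<dots> = 2 * \<bar>c\<bar> * (\<integral>\<omega>. (X \<omega> / \<eta> - B0 \<omega>)\<^sup>2 \<partial>M) + 2 * (\<integral>\<omega>. \<bar>X \<omega>\<bar> * (B0 \<omega>)\<^sup>2 \<partial>M)"
    using diff_sq weighted_int by (simp add: square_integrable_def)
  finally show ?thesis .
qed

lemma (in prob_space) tendsto_integral_abs_cube_div_square: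
  fixes B :: "real \<Rightarrow> 'a \<Rightarrow> real"
  assumes B: "\<And>\<eta>. 0 < \<eta> \<Longrightarrow> B \<eta> \<in> borel_measurable M"
    and bound: "\<And>\<eta>. 0 < \<eta> \<Longrightarrow> AE \<omega> in M. \<bar>B \<eta> \<omega>\<bar> \<le> c"
    and B0: "square_integrable M B0"
    and L2: "((\<lambda>\<eta>. \<integral>\<omega>. (B \<eta> \<omega> / \<eta> - B0 \<omega>)\<^sup>2 \<partial>M) \<longlongrightarrow> 0) (at_right 0)"
  shows "((\<lambda>\<eta>. (\<integral>\<omega>. \<bar>B \<eta> \<omega>\<bar>^3 \<partial>M) / \<eta>\<^sup>2) \<longlongrightarrow> 0) (at_right 0)"
proof (rule Lim_null_comparison)
  show "\<forall>\<^sub>F \<eta> in at_right 0. norm ((\<integral>\<omega>. \<bar>B \<eta> \<omega>\<bar>^3 \<partial>M) / \<eta>\<^sup>2)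
      \<le> 2 * \<bar>c\<bar> * (\<integral>\<omega>. (B \<eta> \<omega> / \<eta> - B0 \<omega>)\<^sup>2 \<partial>M) + 2 * (\<integral>\<omega>. \<bar>B \<eta> \<omega>\<bar> * (B0 \<omega>)\<^sup>2 \<partial>M)"
    using eventually_at_right_less
    by eventually_elim (use integral_abs_cube_div_le[OF B bound B0] in \<open>simp add: integral_nonneg_AE\<close>)
  have "((\<lambda>\<eta>. \<integral>\<omega>. \<bar>B \<eta> \<omega>\<bar> \<partial>M) \<longlongrightarrow> 0) (at_right 0)"
    using tendsto_integral_abs_zero[OF square_integrable_bounded[OF B bound] B0 L2] .
  then have "((\<lambda>\<eta>. \<integral>\<omega>. \<bar>B \<eta> \<omega>\<bar> * (B0 \<omega>)\<^sup>2 \<partial>M) \<longlongrightarrow> 0) (at_right 0)"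
  proof (rule tendsto_integral_abs_mult_zero[rotated 3])
    show "integrable M (\<lambda>\<omega>. (B0 \<omega>)\<^sup>2)" using B0 by (simp add: square_integrable_def)
    show "\<forall>\<^sub>F \<eta> in at_right 0. B \<eta> \<in> borel_measurable M \<and> (AE \<omega> in M. \<bar>B \<eta> \<omega>\<bar> \<le> c)"
      using eventually_at_right_less by eventually_elim (use B bound in blast)
  qed simp
  then show "((\<lambda>\<eta>. 2 * \<bar>c\<bar> * (\<integral>\<omega>. (B \<eta> \<omega> / \<eta> - B0 \<omega>)\<^sup>2 \<partial>M)
      + 2 * (\<integral>\<omega>. \<bar>B \<eta> \<omega>\<bar> * (B0 \<omega>)\<^sup>2 \<partial>M)) \<longlongrightarrow> 0) (at_right 0)"
    using tendsto_add[OF tendsto_mult_right_zero[OF L2]] tendsto_mult_right_zero by fastforce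
qed

lemma L2_convergence_of_weak_expansion:
  fixes B :: "real \<Rightarrow> 'a \<Rightarrow> real"
  assumes B: "\<And>\<eta>. 0 < \<eta> \<Longrightarrow> square_integrable M (B \<eta>)"
    and B0: "square_integrable M B0" and R0: "square_integrable M R0"
    and weak: "\<And>g. square_integrable M g \<Longrightarrow>
       ((\<lambda>\<eta>. (\<integral>\<omega>. (B \<eta> \<omega> - \<eta> * B0 \<omega> - \<eta>\<^sup>2 * R0 \<omega>) * g \<omega> \<partial>M) / \<eta>\<^sup>2) \<longlongrightarrow> 0) (at_right 0)"
  shows "((\<lambda>\<eta>. \<integral>\<omega>. (B \<eta> \<omega> / \<eta> - B0 \<omega>)\<^sup>2 \<partial>M) \<longlongrightarrow> 0) (at_right 0)"
proof -
  define z where "z \<eta> \<omega> = (B \<eta> \<omega> - \<eta> * B0 \<omega> - \<eta>\<^sup>2 * R0 \<omega>) / \<eta>\<^sup>2" for \<eta> \<omega>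
  have z: "square_integrable M (z \<eta>)" if "0 < \<eta>" for \<eta>
  proof -
    have "square_integrable M (\<lambda>\<omega>. 1 * B \<eta> \<omega> + (- \<eta>) * B0 \<omega>)"
      by (rule square_integrable_lin[OF B[OF that] B0])
    from square_integrable_lin[OF this R0, of "1 / \<eta>\<^sup>2" "- 1"]
    show ?thesis
      using that by (simp add: z_def[abs_def] diff_divide_distrib)
  qed
  have "\<exists>C. \<forall>\<^sub>F \<eta> in at_right 0. (\<integral>\<omega>. (z \<eta> \<omega>)\<^sup>2 \<partial>M) \<le> C"
  proof (rule weakly_null_at_right_imp_bounded[OF z])
    show "((\<lambda>\<eta>. \<integral>\<omega>. z \<eta> \<omega> * g \<omega> \<partial>M) \<longlongrightarrow> 0) (at_right 0)" if "square_integrable M g" for g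
      using weak[OF that] by (simp add: z_def)
  qed
  then obtain C where C: "\<forall>\<^sub>F \<eta> in at_right 0. (\<integral>\<omega>. (z \<eta> \<omega>)\<^sup>2 \<partial>M) \<le> C" by blast
  define D where "D = 2 * (\<integral>\<omega>. (R0 \<omega>)\<^sup>2 \<partial>M) + 2 * C"
  show ?thesis
  proof (rule Lim_null_comparison)
    show "\<forall>\<^sub>F \<eta> in at_right 0. norm (\<integral>\<omega>. (B \<eta> \<omega> / \<eta> - B0 \<omega>)\<^sup>2 \<partial>M) \<le> \<eta>\<^sup>2 * D"
      using C eventually_at_right_less
    proof eventually_elim
      case (elim \<eta>)
      have "B \<eta> \<omega> / \<eta> - B0 \<omega> = \<eta> * (R0 \<omega> + z \<eta> \<omega>)" for \<omega>
        using elim(2) by (simp add: z_def field_simps power2_eq_square)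
      then have "(\<integral>\<omega>. (B \<eta> \<omega> / \<eta> - B0 \<omega>)\<^sup>2 \<partial>M) = \<eta>\<^sup>2 * (\<integral>\<omega>. (R0 \<omega> + z \<eta> \<omega>)\<^sup>2 \<partial>M)"
        by (simp add: power_mult_distrib)
      also have "\<dots> \<le> \<eta>\<^sup>2 * D"
        using integral_square_add_le[OF R0 z[OF elim(2)]] elim(1)
        by (intro mult_left_mono) (auto simp: D_def)
      finally show ?case
        by (simp add: integral_nonneg_AE)
    qed
    show "((\<lambda>\<eta>. \<eta>\<^sup>2 * D) \<longlongrightarrow> 0) (at_right 0)"
      by (auto intro!: tendsto_eq_intros)
  qed
qed

lemma (in prob_space) mean_of_weak_expansion:
  fixes B :: "real \<Rightarrow> 'a \<Rightarrow> real"
  assumes B: "\<And>\<eta>. 0 < \<eta> \<Longrightarrow> square_integrable M (B \<eta>)"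
    and B0: "square_integrable M B0" and R0: "square_integrable M R0"
    and weak: "\<And>g. square_integrable M g \<Longrightarrow>
       ((\<lambda>\<eta>. (\<integral>\<omega>. (B \<eta> \<omega> - \<eta> * B0 \<omega> - \<eta>\<^sup>2 * R0 \<omega>) * g \<omega> \<partial>M) / \<eta>\<^sup>2) \<longlongrightarrow> 0) (at_right 0)"
  shows "((\<lambda>\<eta>. ((\<integral>\<omega>. B \<eta> \<omega> \<partial>M) - \<eta> * (\<integral>\<omega>. B0 \<omega> \<partial>M) - \<eta>\<^sup>2 * (\<integral>\<omega>. R0 \<omega> \<partial>M)) / \<eta>\<^sup>2)
           \<longlongrightarrow> 0) (at_right 0)"
proof (rule Lim_transform_eventually[OF weak[OF square_integrable_const[of 1]]])
  show "\<forall>\<^sub>F \<eta> in at_right 0. (\<integral>\<omega>. (B \<eta> \<omega> - \<eta> * B0 \<omega> - \<eta>\<^sup>2 * R0 \<omega>) * 1 \<partial>M) / \<eta>\<^sup>2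
      = ((\<integral>\<omega>. B \<eta> \<omega> \<partial>M) - \<eta> * (\<integral>\<omega>. B0 \<omega> \<partial>M) - \<eta>\<^sup>2 * (\<integral>\<omega>. R0 \<omega> \<partial>M)) / \<eta>\<^sup>2"
    using eventually_at_right_less
    by eventually_elim (use B B0 R0 in \<open>simp add: integrable_square_integrable\<close>)
qed

lemma (in prob_space) expectation_expansion_smooth_fun:
  fixes B :: "real \<Rightarrow> 'a \<Rightarrow> real"
  assumes \<phi>: "smooth_fun \<phi>"
    and B: "\<And>\<eta>. 0 < \<eta> \<Longrightarrow> B \<eta> \<in> borel_measurable M"
    and bound: "\<And>\<eta>. 0 < \<eta> \<Longrightarrow> AE \<omega> in M. \<bar>B \<eta> \<omega>\<bar> \<le> c"
    and B0: "square_integrable M B0"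
    and mean: "((\<lambda>\<eta>. ((\<integral>\<omega>. B \<eta> \<omega> \<partial>M) - \<eta> * m1 - \<eta>\<^sup>2 * m2) / \<eta>\<^sup>2) \<longlongrightarrow> 0) (at_right 0)"
    and L2: "((\<lambda>\<eta>. \<integral>\<omega>. (B \<eta> \<omega> / \<eta> - B0 \<omega>)\<^sup>2 \<partial>M) \<longlongrightarrow> 0) (at_right 0)"
  shows "((\<lambda>\<eta>. ((\<integral>\<omega>. \<phi> (B \<eta> \<omega>) \<partial>M) - \<phi> 0 - \<eta> * m1 * deriv \<phi> 0
            - \<eta>\<^sup>2 / 2 * (\<integral>\<omega>. (B0 \<omega>)\<^sup>2 \<partial>M) * (deriv ^^ 2) \<phi> 0
            - \<eta>\<^sup>2 * m2 * deriv \<phi> 0) / \<eta>\<^sup>2) \<longlongrightarrow> 0) (at_right 0)"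
proof -
  define c1 c2 where "c1 = deriv \<phi> 0" and "c2 = (deriv ^^ 2) \<phi> 0"
  define rem where "rem \<eta> = (\<integral>\<omega>. \<phi> (B \<eta> \<omega>) \<partial>M) - \<phi> 0 - c1 * (\<integral>\<omega>. B \<eta> \<omega> \<partial>M)
      - c2 / 2 * (\<integral>\<omega>. (B \<eta> \<omega>)\<^sup>2 \<partial>M)" for \<eta>
  obtain K where "0 \<le> K" and K: "\<And>\<eta>. 0 < \<eta> \<Longrightarrow> \<bar>rem \<eta>\<bar> \<le> K * (\<integral>\<omega>. \<bar>B \<eta> \<omega>\<bar>^3 \<partial>M)"
    using smooth_fun_expectation_remainder[OF \<phi>, of c] B bound unfolding rem_def c1_def c2_def by metis
  have rem_lim: "((\<lambda>\<eta>. rem \<eta> / \<eta>\<^sup>2) \<longlongrightarrow> 0) (at_right 0)"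
  proof (rule Lim_null_comparison)
    show "\<forall>\<^sub>F \<eta> in at_right 0. norm (rem \<eta> / \<eta>\<^sup>2) \<le> K * ((\<integral>\<omega>. \<bar>B \<eta> \<omega>\<bar>^3 \<partial>M) / \<eta>\<^sup>2)"
      using eventually_at_right_less
      by eventually_elim (use K in \<open>simp add: abs_divide divide_right_mono\<close>)
    show "((\<lambda>\<eta>. K * ((\<integral>\<omega>. \<bar>B \<eta> \<omega>\<bar>^3 \<partial>M) / \<eta>\<^sup>2)) \<longlongrightarrow> 0) (at_right 0)"
      using tendsto_mult_right_zero[OF tendsto_integral_abs_cube_div_square[OF B bound B0 L2]] by simp
  qed
  have second_lim: "((\<lambda>\<eta>. (\<integral>\<omega>. (B \<eta> \<omega>)\<^sup>2 \<partial>M) / \<eta>\<^sup>2 - (\<integral>\<omega>. (B0 \<omega>)\<^sup>2 \<partial>M)) \<longlongrightarrow> 0) (at_right 0)"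
    using tendsto_second_moment_div_square[OF square_integrable_bounded[OF B bound] B0 L2]
    by (simp add: LIM_zero_iff)
  have "((\<lambda>\<eta>. rem \<eta> / \<eta>\<^sup>2 + c1 * (((\<integral>\<omega>. B \<eta> \<omega> \<partial>M) - \<eta> * m1 - \<eta>\<^sup>2 * m2) / \<eta>\<^sup>2)
      + c2 / 2 * ((\<integral>\<omega>. (B \<eta> \<omega>)\<^sup>2 \<partial>M) / \<eta>\<^sup>2 - (\<integral>\<omega>. (B0 \<omega>)\<^sup>2 \<partial>M))) \<longlongrightarrow> 0) (at_right 0)"
    using tendsto_add[OF tendsto_add[OF rem_lim tendsto_mult_right_zero[OF mean, of c1]]
        tendsto_mult_right_zero[OF second_lim, of "c2 / 2"]]
    by simp
  moreover have "\<forall>\<^sub>F \<eta> in at_right 0.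
      rem \<eta> / \<eta>\<^sup>2 + c1 * (((\<integral>\<omega>. B \<eta> \<omega> \<partial>M) - \<eta> * m1 - \<eta>\<^sup>2 * m2) / \<eta>\<^sup>2)
      + c2 / 2 * ((\<integral>\<omega>. (B \<eta> \<omega>)\<^sup>2 \<partial>M) / \<eta>\<^sup>2 - (\<integral>\<omega>. (B0 \<omega>)\<^sup>2 \<partial>M))
    = ((\<integral>\<omega>. \<phi> (B \<eta> \<omega>) \<partial>M) - \<phi> 0 - \<eta> * m1 * deriv \<phi> 0
            - \<eta>\<^sup>2 / 2 * (\<integral>\<omega>. (B0 \<omega>)\<^sup>2 \<partial>M) * (deriv ^^ 2) \<phi> 0
            - \<eta>\<^sup>2 * m2 * deriv \<phi> 0) / \<eta>\<^sup>2"
    using eventually_at_right_less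
    by eventually_elim (simp add: rem_def c1_def c2_def field_simps)
  ultimately show ?thesis
    by (rule Lim_transform_eventually)
qed

lemma (in prob_space) law_expansion_of_weak_expansion:
  fixes B :: "real \<Rightarrow> 'a \<Rightarrow> real"
  assumes \<phi>: "smooth_fun \<phi>"
    and meas: "\<And>\<eta>. 0 < \<eta> \<Longrightarrow> B \<eta> \<in> borel_measurable M"
    and bound: "\<And>\<eta>. 0 < \<eta> \<Longrightarrow> AE \<omega> in M. \<bar>B \<eta> \<omega>\<bar> \<le> c"
    and B0: "square_integrable M B0" and R0: "square_integrable M R0"
    and weak: "\<And>g. square_integrable M g \<Longrightarrow>
       ((\<lambda>\<eta>. (\<integral>\<omega>. (B \<eta> \<omega> - \<eta> * B0 \<omega> - \<eta>\<^sup>2 * R0 \<omega>) * g \<omega> \<partial>M) / \<eta>\<^sup>2) \<longlongrightarrow> 0) (at_right 0)"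
  shows "((\<lambda>\<eta>. ((\<integral>y. \<phi> y \<partial>distr M borel (B \<eta>)) - \<phi> 0 - \<eta> * (\<integral>\<omega>. B0 \<omega> \<partial>M) * deriv \<phi> 0
            - \<eta>\<^sup>2 / 2 * (\<integral>\<omega>. (B0 \<omega>)\<^sup>2 \<partial>M) * (deriv ^^ 2) \<phi> 0
            - \<eta>\<^sup>2 * (\<integral>\<omega>. R0 \<omega> \<partial>M) * deriv \<phi> 0) / \<eta>\<^sup>2) \<longlongrightarrow> 0) (at_right 0)"
proof -
  have B_sq: "square_integrable M (B \<eta>)" if "0 < \<eta>" for \<eta>
    by (rule square_integrable_bounded[OF meas[OF that] bound[OF that]])
  note L2 = L2_convergence_of_weak_expansion[OF B_sq B0 R0 weak]
  note mean = mean_of_weak_expansion[OF B_sq B0 R0 weak]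
  have distr_eq: "\<forall>\<^sub>F \<eta> in at_right 0. (\<integral>\<omega>. \<phi> (B \<eta> \<omega>) \<partial>M) = (\<integral>y. \<phi> y \<partial>distr M borel (B \<eta>))"
    using eventually_at_right_less
    by eventually_elim (rule integral_distr[OF meas borel_measurable_smooth_fun[OF \<phi>], symmetric])
  show ?thesis
    by (rule Lim_transform_eventually[OF expectation_expansion_smooth_fun[OF \<phi> meas bound B0 mean L2]])
       (use distr_eq in \<open>auto elim: eventually_mono\<close>)
qed

theorem lemma20:
  fixes \<Omega> :: "'a measure"
    and B :: "real \<Rightarrow> 'a \<Rightarrow> real"
    and B0 R0 :: "'a \<Rightarrow> real"
    and M :: real
    and P1 P2 :: "(real \<Rightarrow> real) \<Rightarrow> real"
  assumes prob: "prob_space \<Omega>"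
    and meas: "\<And>\<eta>. \<eta> > 0 \<Longrightarrow> B \<eta> \<in> borel_measurable \<Omega>"
    and bound: "\<And>\<eta>. \<eta> > 0 \<Longrightarrow> AE \<omega> in \<Omega>. \<bar>B \<eta> \<omega>\<bar> \<le> M"
    and B0_L2: "B0 \<in> borel_measurable \<Omega>" "integrable \<Omega> (\<lambda>\<omega>. (B0 \<omega>)\<^sup>2)"
    and R0_L2: "R0 \<in> borel_measurable \<Omega>" "integrable \<Omega> (\<lambda>\<omega>. (R0 \<omega>)\<^sup>2)"
    and weak: "\<And>g. g \<in> borel_measurable \<Omega> \<Longrightarrow> integrable \<Omega> (\<lambda>\<omega>. (g \<omega>)\<^sup>2) \<Longrightarrow>
       ((\<lambda>\<eta>. (\<integral>\<omega>. (B \<eta> \<omega> - \<eta> * B0 \<omega> - \<eta>\<^sup>2 * R0 \<omega>) * g \<omega> \<partial>\<Omega>) / \<eta>\<^sup>2) \<longlongrightarrow> 0)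
         (at_right 0)"
    and P1: "compact_distribution P1"
    and P2: "compact_distribution P2"
    and law: "\<And>\<phi>. smooth_fun \<phi> \<Longrightarrow>
       ((\<lambda>\<eta>. ((\<integral>y. \<phi> y \<partial>(distr \<Omega> borel (B \<eta>))) - \<phi> 0 - \<eta> * P1 \<phi> - \<eta>\<^sup>2 * P2 \<phi>) / \<eta>\<^sup>2)
          \<longlongrightarrow> 0) (at_right 0)"
  shows "\<And>\<phi>. smooth_fun \<phi> \<Longrightarrow>
       ((\<lambda>\<eta>. ((\<integral>y. \<phi> y \<partial>(distr \<Omega> borel (B \<eta>)))
              - \<phi> 0
              - \<eta> * (\<integral>\<omega>. B0 \<omega> \<partial>\<Omega>) * deriv \<phi> 0
              - \<eta>\<^sup>2 / 2 * (\<integral>\<omega>. (B0 \<omega>)\<^sup>2 \<partial>\<Omega>) * (deriv ^^ 2) \<phi> 0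
              - \<eta>\<^sup>2 * (\<integral>\<omega>. R0 \<omega> \<partial>\<Omega>) * deriv \<phi> 0) / \<eta>\<^sup>2)
          \<longlongrightarrow> 0) (at_right 0)"
proof -
  have "square_integrable \<Omega> B0" and "square_integrable \<Omega> R0"
    using B0_L2 R0_L2 by (simp_all add: square_integrable_def)
  then show "((\<lambda>\<eta>. ((\<integral>y. \<phi> y \<partial>(distr \<Omega> borel (B \<eta>)))
              - \<phi> 0
              - \<eta> * (\<integral>\<omega>. B0 \<omega> \<partial>\<Omega>) * deriv \<phi> 0
              - \<eta>\<^sup>2 / 2 * (\<integral>\<omega>. (B0 \<omega>)\<^sup>2 \<partial>\<Omega>) * (deriv ^^ 2) \<phi> 0
              - \<eta>\<^sup>2 * (\<integral>\<omega>. R0 \<omega> \<partial>\<Omega>) * deriv \<phi> 0) / \<eta>\<^sup>2)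
          \<longlongrightarrow> 0) (at_right 0)" if "smooth_fun \<phi>" for \<phi>
    using prob_space.law_expansion_of_weak_expansion[OF prob that meas bound] weak
    by (simp add: square_integrable_def)
qed

end
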